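(* Let $P_1\ge P_2\ge\cdots\ge P_K\ge0$ with $P_1>0$. For any nonempty set $A\subseteq\{1,\dots,K\}$ with $l=\min A$, $$\frac12\log\left(1+\Big(\sum_{j\in A}\sqrt{P_j}\Big)^2\right)-\left[\frac12\log\left(\Big(\frac1{\sum_{j=1}^KP_j}+1\Big)P_l\right)\right]^+\le\log K.$$
   Context: Logarithms are base 2, $[x]^+=\max\{x,0\}$, and $[\log 0]^+=0$. *)

theory Defs
  imports "HOL-Analysis.Analysis"
begin

definition pos_log2 :: "real \<Rightarrow> real" where
  "pos_log2 x = (if x \<le> 0 then 0 else max (log 2 x) 0)"

end

theory Submission imports Defs begin

text \<open>
  Let \<open>m = |A|\<close>, \<open>p = P\<^sub>l\<close> and \<open>T = \<Sum>\<^sub>j P\<^sub>j\<close>. Monotonicity gives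
  \<open>\<Sum>\<^sub>j\<^sub>\<in>\<^sub>A \<surd>P\<^sub>j \<le> m \<surd>p\<close>, so it suffices to show
  \<open>1 + m\<^sup>2 p \<le> K\<^sup>2 max 1 ((1/T + 1) p)\<close> and take logarithms.
  If \<open>m < K\<close>, then \<open>1 + m\<^sup>2 p \<le> (m + 1)\<^sup>2 max 1 p\<close>.
  If \<open>m = K\<close>, then \<open>A = {1..K}\<close>, so \<open>l = 1\<close> and \<open>T \<le> K p\<close>, whence
  \<open>K\<^sup>2 p / T \<ge> K \<ge> 1\<close>.
\<close>

lemma pos_log2_eq_log_max: "x \<ge> 0 \<Longrightarrow> pos_log2 x = log 2 (max 1 x)"
  unfolding pos_log2_def by (auto simp: max_def)

lemma half_log_diff_le_log:
  fixes x q k :: real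
  assumes "x \<ge> 0" "q \<ge> 0" "k > 0" "1 + x \<le> k\<^sup>2 * max 1 q"
  shows "(1/2) * log 2 (1 + x) - (1/2) * pos_log2 q \<le> log 2 k"
proof -
  have "log 2 (1 + x) \<le> log 2 (k\<^sup>2 * max 1 q)"
    using assms by (intro log_mono) auto
  also have "\<dots> = 2 * log 2 k + log 2 (max 1 q)"
    using \<open>k > 0\<close> by (simp add: log_mult log_nat_power)
  finally show ?thesis
    using pos_log2_eq_log_max[OF \<open>q \<ge> 0\<close>] by simp
qed

lemma one_plus_sq_mult_le_proper:
  fixes m k p t :: real
  assumes "0 \<le> m" "m + 1 \<le> k" "0 \<le> p" "0 \<le> t"
  shows "1 + m\<^sup>2 * p \<le> k\<^sup>2 * max 1 ((1/t + 1) * p)"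
proof (cases "p \<le> 1")
  case True
  have "1 + m\<^sup>2 * p \<le> 1 + m\<^sup>2"
    using True \<open>0 \<le> p\<close> by (simp add: mult_left_le)
  also have "\<dots> \<le> (m + 1)\<^sup>2"
    using \<open>0 \<le> m\<close> by (simp add: power2_eq_square algebra_simps)
  also have "\<dots> \<le> k\<^sup>2"
    using assms by (intro power_mono) auto
  also have "\<dots> \<le> k\<^sup>2 * max 1 ((1/t + 1) * p)"
    using mult_left_mono[of 1 "max 1 ((1/t + 1) * p)" "k\<^sup>2"] by simp
  finally show ?thesis .
next
  case False
  have "0 \<le> m * p" using assms by simp
  hence "1 + m\<^sup>2 * p \<le> (m + 1)\<^sup>2 * p"
    using False by (simp add: power2_eq_square algebra_simps)
  also have "\<dots> \<le> k\<^sup>2 * p"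
    using assms by (intro mult_right_mono power_mono) auto
  also have "\<dots> \<le> k\<^sup>2 * ((1/t + 1) * p)"
    using assms by (intro mult_left_mono) (auto simp: algebra_simps)
  also have "\<dots> \<le> k\<^sup>2 * max 1 ((1/t + 1) * p)"
    by (intro mult_left_mono) auto
  finally show ?thesis .
qed

lemma one_plus_sq_mult_le_full:
  fixes k p t :: real
  assumes "1 \<le> k" "0 < t" "t \<le> k * p"
  shows "1 + k\<^sup>2 * p \<le> k\<^sup>2 * max 1 ((1/t + 1) * p)"
proof -
  have "0 \<le> p"
    using assms by (smt (verit) mult_nonneg_nonpos)
  hence "k * p \<le> k\<^sup>2 * p"
    using \<open>1 \<le> k\<close> by (intro mult_right_mono) (auto simp: power2_eq_square)
  hence "t \<le> k\<^sup>2 * p"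
    using \<open>t \<le> k * p\<close> by linarith
  hence "1 \<le> k\<^sup>2 * p / t"
    using \<open>0 < t\<close> by simp
  hence "1 + k\<^sup>2 * p \<le> k\<^sup>2 * ((1/t + 1) * p)"
    by (simp add: algebra_simps)
  also have "\<dots> \<le> k\<^sup>2 * max 1 ((1/t + 1) * p)"
    by (intro mult_left_mono) auto
  finally show ?thesis .
qed

lemma sq_sum_sqrt_le_card_sq_Min:
  fixes P :: "nat \<Rightarrow> real" and A :: "nat set"
  assumes "finite A" "A \<noteq> {}" "\<And>j. j \<in> A \<Longrightarrow> 0 \<le> P j \<and> P j \<le> P (Min A)"
  shows "(\<Sum>j\<in>A. sqrt (P j))\<^sup>2 \<le> (real (card A))\<^sup>2 * P (Min A)"
proof -
  have "(\<Sum>j\<in>A. sqrt (P j)) \<le> card A * sqrt (P (Min A))"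
    using sum_mono[of A "\<lambda>j. sqrt (P j)" "\<lambda>_. sqrt (P (Min A))"] assms by simp
  hence "(\<Sum>j\<in>A. sqrt (P j))\<^sup>2 \<le> (card A * sqrt (P (Min A)))\<^sup>2"
    using assms by (intro power_mono sum_nonneg) auto
  thus ?thesis
    using assms(3)[of "Min A"] assms(1,2) by (simp add: power_mult_distrib)
qed

theorem lemma5:
  fixes K :: nat and P :: "nat \<Rightarrow> real" and A :: "nat set"
  assumes K_pos: "K \<ge> 1"
    and mono: "\<And>i j. 1 \<le> i \<Longrightarrow> i \<le> j \<Longrightarrow> j \<le> K \<Longrightarrow> P j \<le> P i"
    and nonneg: "\<And>j. 1 \<le> j \<Longrightarrow> j \<le> K \<Longrightarrow> P j \<ge> 0"
    and P1: "P 1 > 0"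
    and A_sub: "A \<subseteq> {1..K}" and A_ne: "A \<noteq> {}"
  shows "(1/2) * log 2 (1 + (\<Sum>j\<in>A. sqrt (P j))^2)
           - (1/2) * pos_log2 ((1 / (\<Sum>j=1..K. P j) + 1) * P (Min A))
         \<le> log 2 (real K)"
proof -
  define T where "T = (\<Sum>j=1..K. P j)"
  define l where "l = Min A"
  define S where "S = (\<Sum>j\<in>A. sqrt (P j))"
  have finA: "finite A" using A_sub finite_subset by blast
  have "l \<in> A" unfolding l_def using finA A_ne by simp
  hence l: "1 \<le> l" "l \<le> K" using A_sub by auto
  have Pl: "P l \<ge> 0" using nonneg l by simp
  have T_pos: "T > 0"
    unfolding T_def using P1 K_pos nonneg
    by (intro sum_pos2[where i = 1]) auto
  have "0 \<le> P j \<and> P j \<le> P l" if "j \<in> A" for j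
    using that A_sub mono nonneg l finA unfolding l_def by auto
  hence S2: "S\<^sup>2 \<le> (real (card A))\<^sup>2 * P l"
    unfolding S_def l_def using finA A_ne by (intro sq_sum_sqrt_le_card_sq_Min) auto
  have "1 + (real (card A))\<^sup>2 * P l \<le> (real K)\<^sup>2 * max 1 ((1/T + 1) * P l)"
  proof (cases "card A = K")
    case True
    hence "A = {1..K}" using A_sub finA by (intro card_subset_eq) auto
    hence "l = 1" unfolding l_def using K_pos by (auto intro!: Min_eqI)
    have "T \<le> K * P l"
      using sum_mono[of "{1..K}" P "\<lambda>_. P 1"] mono \<open>l = 1\<close> unfolding T_def by auto
    thus ?thesis using True K_pos T_pos by (simp add: one_plus_sq_mult_le_full)
  next
    case False
    hence "card A + 1 \<le> K" using card_mono[OF _ A_sub] by fastforce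
    thus ?thesis using Pl T_pos by (intro one_plus_sq_mult_le_proper) auto
  qed
  hence "1 + S\<^sup>2 \<le> (real K)\<^sup>2 * max 1 ((1/T + 1) * P l)"
    using S2 by linarith
  thus ?thesis
    using half_log_diff_le_log[of "S\<^sup>2" "(1/T + 1) * P l" K] Pl T_pos K_pos
    unfolding T_def l_def S_def by simp
qed

end
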